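(* Let $R$ be a unital ring with involution, let $a\in R$ be core invertible and $b\in R$ with $a\overset{\circledast}{\leq} b$. Then the following conditions are equivalent: (1) $a\overset{\#}{\leq} b$; (2) $ab=ba$; (3) $a^{2}\overset{\circledast}{\leq} b^{2}$; (4) $a^{k}\overset{\circledast}{\leq} b^{k}$ for every integer $k\geq 2$. (Here $a^k$ is core invertible for all $k\ge 1$, with $(a^k)^{\circledast}=(a^{\circledast})^k$.)
   Context: $R$ is a ring with identity and an involution $x\mapsto x^{*}$. An element $a\in R$ is core invertible if there exists $x\in R$ with $axa=a$, $xR=aR$ and $Rx=Ra^{*}$; such $x$ is unique, called the core inverse of $a$ and denoted $a^{\circledast}$. Every core invertible $a$ is group invertible, with group inverse $a^{\#}$ the unique $x$ satisfying $axa=a$, $xax=x$, $ax=xa$. For $c$ core invertible and $d\in R$, $c\overset{\circledast}{\leq} d$ means $c^{\circledast}c=c^{\circledast}d$ and $cc^{\circledast}=dc^{\circledast}$. For group invertible $a$, the sharp partial order $a\overset{\#}{\leq} b$ means $a^{\#}a=a^{\#}b$ and $aa^{\#}=ba^{\#}$. *)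

theory Defs
  imports Main
begin

definition is_involution :: "('a::ring_1 \<Rightarrow> 'a) \<Rightarrow> bool" where
  "is_involution star \<longleftrightarrow>
     (\<forall>x y. star (x + y) = star x + star y) \<and>
     (\<forall>x y. star (x * y) = star y * star x) \<and>
     (\<forall>x. star (star x) = x)"

definition right_ideal :: "'a::ring_1 \<Rightarrow> 'a set" where
  "right_ideal a = {a * r | r. True}"

definition left_ideal :: "'a::ring_1 \<Rightarrow> 'a set" where
  "left_ideal a = {r * a | r. True}"

definition is_core_inverse :: "('a::ring_1 \<Rightarrow> 'a) \<Rightarrow> 'a \<Rightarrow> 'a \<Rightarrow> bool" where
  "is_core_inverse star a x \<longleftrightarrow>
     a * x * a = a \<and> right_ideal x = right_ideal a \<and> left_ideal x = left_ideal (star a)"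

definition core_invertible :: "('a::ring_1 \<Rightarrow> 'a) \<Rightarrow> 'a \<Rightarrow> bool" where
  "core_invertible star a \<longleftrightarrow> (\<exists>x. is_core_inverse star a x)"

definition core_inv :: "('a::ring_1 \<Rightarrow> 'a) \<Rightarrow> 'a \<Rightarrow> 'a" where
  "core_inv star a = (THE x. is_core_inverse star a x)"

definition is_group_inverse :: "'a::ring_1 \<Rightarrow> 'a \<Rightarrow> bool" where
  "is_group_inverse a x \<longleftrightarrow> a * x * a = a \<and> x * a * x = x \<and> a * x = x * a"

definition group_invertible :: "'a::ring_1 \<Rightarrow> bool" where
  "group_invertible a \<longleftrightarrow> (\<exists>x. is_group_inverse a x)"

definition group_inv :: "'a::ring_1 \<Rightarrow> 'a" where
  "group_inv a = (THE x. is_group_inverse a x)"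

definition core_le :: "('a::ring_1 \<Rightarrow> 'a) \<Rightarrow> 'a \<Rightarrow> 'a \<Rightarrow> bool" where
  "core_le star c d \<longleftrightarrow> core_invertible star c \<and>
     core_inv star c * c = core_inv star c * d \<and> c * core_inv star c = d * core_inv star c"

definition sharp_le :: "'a::ring_1 \<Rightarrow> 'a \<Rightarrow> bool" where
  "sharp_le a b \<longleftrightarrow> group_invertible a \<and>
     group_inv a * a = group_inv a * b \<and> a * group_inv a = b * group_inv a"

end

theory Submission
  imports Defs
begin

text \<open>Let \<open>x\<close> be the core inverse of \<open>a\<close>. Everything follows from the equations
  \<open>axa = a\<close>, \<open>xax = x\<close>, \<open>xa\<^sup>2 = a\<close>, \<open>ax\<^sup>2 = x\<close> (with \<open>ax\<close> hermitian): they make \<open>x\<^sup>2a\<close> the group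
  inverse of \<open>a\<close> and \<open>x\<^sup>k\<close> the core inverse of \<open>a\<^sup>k\<close>. Under \<open>a \<le>core b\<close>, i.e. \<open>xa = xb\<close> and
  \<open>ax = bx\<close>, one gets \<open>ba = a\<^sup>2\<close>, and each of the conditions (1), (2), (3) reduces to the single
  equation \<open>x\<^sup>2ab = xa\<close>. Finally \<open>ab = ba\<close> gives \<open>ab\<^sup>k\<^sup>-\<^sup>1 = a\<^sup>k\<close>, whence \<open>x\<^sup>kb\<^sup>k = x\<^sup>ka\<^sup>k\<close>.\<close>

lemma group_inverse_unique:
  assumes g: "is_group_inverse a g" and h: "is_group_inverse a h"
  shows "g = h"
proof -
  have "a * g = a * h"
    using g h unfolding is_group_inverse_def by (metis mult.assoc)
  then show ?thesis
    using g h unfolding is_group_inverse_def by (metis mult.assoc)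
qed

locale core_inverse_equations =
  fixes a x :: "'a::ring_1"
  assumes axa: "a * x * a = a"
    and xax: "x * a * x = x"
    and xaa: "x * a * a = a"
    and axx: "a * x * x = x"
begin

lemma reassoc:
  "a * (x * a) = a" "a * (x * (a * z)) = a * z"
  "x * (a * x) = x" "x * (a * (x * z)) = x * z"
  "x * (a * a) = a" "x * (a * (a * z)) = a * z"
  "a * (x * x) = x" "a * (x * (x * z)) = x * z"
  using axa xax xaa axx by (simp_all add: mult.assoc[symmetric])

lemma is_group_inverse: "is_group_inverse a (x * x * a)"
  unfolding is_group_inverse_def by (simp add: mult.assoc reassoc)

lemma power_mult_power:
  "a ^ Suc n * x ^ Suc n = a * x" "x ^ Suc n * a ^ Suc n = x * a"
proof (induction n)
  case (Suc n)
  have "a ^ Suc (Suc n) * x ^ Suc (Suc n) = a * (a ^ Suc n * x ^ Suc n) * x"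
    by (simp only: power_Suc[of a "Suc n"] power_Suc2[of x "Suc n"] mult.assoc)
  moreover have "x ^ Suc (Suc n) * a ^ Suc (Suc n) = x * (x ^ Suc n * a ^ Suc n) * a"
    by (simp only: power_Suc[of x "Suc n"] power_Suc2[of a "Suc n"] mult.assoc)
  ultimately show "a ^ Suc (Suc n) * x ^ Suc (Suc n) = a * x"
    "x ^ Suc (Suc n) * a ^ Suc (Suc n) = x * a"
    by (simp_all only: Suc.IH mult.assoc reassoc)
qed simp_all

lemma powers: "core_inverse_equations (a ^ Suc n) (x ^ Suc n)"
  by unfold_locales
    (simp_all only: power_mult_power, simp_all add: mult.assoc[symmetric] axa xax xaa axx)

end

locale core_below = core_inverse_equations +
  fixes b
  assumes xa_eq_xb: "x * a = x * b"
    and ax_eq_bx: "a * x = b * x"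
begin

lemma x_mult_b: "x * b = x * a" "x * (b * z) = x * (a * z)"
  using xa_eq_xb by (simp_all add: mult.assoc[symmetric])

lemma b_mult_x: "b * x = a * x" "b * (x * z) = a * (x * z)"
  using ax_eq_bx by (simp_all add: mult.assoc[symmetric])

lemma b_mult_a: "b * a = a * a"
  by (metis b_mult_x(2) reassoc(5))

lemma b_power_mult_a: "b ^ n * a = a ^ Suc n"
proof (induction n)
  case (Suc n)
  have "b ^ Suc n * a = b ^ n * a * a"
    by (simp only: power_Suc2[of b n] mult.assoc b_mult_a)
  then show ?case by (simp only: Suc power_Suc2[of a "Suc n"])
qed simp

lemma b_power_mult_x_power:
  "b ^ Suc n * x ^ Suc n = a ^ Suc n * x ^ Suc n"
proof -
  have "b ^ Suc n * x ^ Suc n = b ^ n * (b * x) * x ^ n"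
    by (simp only: power_Suc2[of b n] power_Suc[of x n] mult.assoc)
  also have "\<dots> = (b ^ n * a) * (x * x ^ n)"
    by (simp only: b_mult_x mult.assoc)
  finally show ?thesis by (simp only: b_power_mult_a power_Suc[of x n])
qed

lemma sharp_le_iff: "sharp_le a b \<longleftrightarrow> x * x * a * b = x * a"
proof -
  have "group_inv a = x * x * a"
    unfolding group_inv_def by (metis the_equality is_group_inverse group_inverse_unique)
  moreover have "x * x * a * a = x * a" "a * (x * x * a) = x * a" "b * (x * x * a) = x * a"
    by (simp_all add: mult.assoc reassoc b_mult_x)
  ultimately show ?thesis
    unfolding sharp_le_def group_invertible_def using is_group_inverse by auto
qed

lemma commute_iff: "a * b = b * a \<longleftrightarrow> x * x * a * b = x * a"
proof
  assume "a * b = b * a"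
  then have "x * x * a * b = x * (x * (a * a))"
    by (simp add: mult.assoc b_mult_a)
  then show "x * x * a * b = x * a" by (simp add: reassoc)
next
  assume "x * x * a * b = x * a"
  then have "a * (a * (x * (x * (a * b)))) = a * a"
    by (simp add: mult.assoc reassoc)
  then show "a * b = b * a" by (simp add: reassoc b_mult_a)
qed

lemma x_power2_mult_eq_iff:
  "x ^ 2 * a ^ 2 = x ^ 2 * b ^ 2 \<longleftrightarrow> x * x * a * b = x * a"
proof -
  have "x ^ 2 * a ^ 2 = x * a"
    using power_mult_power(2)[of 1] by (simp add: numeral_2_eq_2)
  moreover have "x ^ 2 * b ^ 2 = x * x * a * b"
    by (simp add: power2_eq_square mult.assoc x_mult_b)
  ultimately show ?thesis by auto
qed

lemma commute_imp_x_power_mult_b_power: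
  assumes "a * b = b * a"
  shows "x ^ Suc n * b ^ Suc n = x ^ Suc n * a ^ Suc n"
proof -
  have ab_power: "a * b ^ k = a ^ Suc k" for k
  proof (induction k)
    case (Suc k)
    have "a * b ^ Suc k = a * (a * b ^ k)"
      by (simp add: mult.assoc[symmetric] assms b_mult_a)
    then show ?case by (simp add: Suc)
  qed simp
  have "x ^ Suc n * b ^ Suc n = x ^ n * x * (a * b ^ n)"
    by (simp only: power_Suc2[of x n] power_Suc[of b n] mult.assoc x_mult_b)
  then show ?thesis by (simp only: ab_power power_Suc2[of x n])
qed

end

lemma right_ideal_subset_iff: "right_ideal y \<subseteq> right_ideal c \<longleftrightarrow> (\<exists>r. y = c * r)"
  unfolding right_ideal_def
proof
  assume "{y * r |r. True} \<subseteq> {c * r |r. True}"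
  moreover have "y * 1 \<in> {y * r |r. True}" by blast
  ultimately show "\<exists>r. y = c * r" by auto
next
  assume "\<exists>r. y = c * r"
  then obtain r where "y = c * r" by blast
  then have "y * s = c * (r * s)" for s by (simp add: mult.assoc)
  then show "{y * s |s. True} \<subseteq> {c * s |s. True}" by blast
qed

lemma left_ideal_subset_iff: "left_ideal y \<subseteq> left_ideal c \<longleftrightarrow> (\<exists>r. y = r * c)"
  unfolding left_ideal_def
proof
  assume "{r * y |r. True} \<subseteq> {r * c |r. True}"
  moreover have "1 * y \<in> {r * y |r. True}" by blast
  ultimately show "\<exists>r. y = r * c" by auto
next
  assume "\<exists>r. y = r * c"
  then obtain r where "y = r * c" by blast
  then have "s * y = (s * r) * c" for s by (simp add: mult.assoc)
  then show "{s * y |s. True} \<subseteq> {s * c |s. True}" by blast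
qed

context
  fixes star :: "'a::ring_1 \<Rightarrow> 'a"
  assumes involution: "is_involution star"
begin

lemma star_mult: "star (u * v) = star v * star u"
  using involution unfolding is_involution_def by simp

lemma star_star: "star (star u) = u"
  using involution unfolding is_involution_def by simp

lemma core_inverseD:
  assumes "is_core_inverse star a x"
  shows "core_inverse_equations a x" and "star (a * x) = a * x"
proof -
  have axa: "a * x * a = a"
    using assms unfolding is_core_inverse_def by blast
  obtain r s t where r: "x = a * r" and s: "a = x * s" and t: "x = t * star a"
    using assms unfolding is_core_inverse_def set_eq_subset right_ideal_subset_iff left_ideal_subset_iff
    by blast
  have "star a = star (a * x * a)" by (simp only: axa)
  also have "\<dots> = star a * star x * star a" by (simp only: star_mult mult.assoc)
  finally have "x = t * (star a * star x * star a)" by (simp only: t)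
  then have x_eq: "x = x * star x * star a" by (simp only: t mult.assoc)
  then have "a * x = (a * x) * star (a * x)"
    by (simp only: star_mult mult.assoc)
  then have "star (a * x) = star (star (a * x)) * star (a * x)"
    by (metis star_mult)
  then show herm: "star (a * x) = a * x"
    using \<open>a * x = (a * x) * star (a * x)\<close> by (simp only: star_star)
  have "x * a * x = x * star (a * x)" by (simp only: herm mult.assoc)
  also have "\<dots> = x" by (simp only: star_mult mult.assoc[symmetric] x_eq[symmetric])
  finally have xax: "x * a * x = x" .
  show "core_inverse_equations a x"
  proof
    show "x * a * a = a" using s xax by (metis mult.assoc)
    show "a * x * x = x" using r axa by (metis mult.assoc)
  qed fact+
qed

lemma core_inverseI:
  assumes "core_inverse_equations a x" and herm: "star (a * x) = a * x"
  shows "is_core_inverse star a x"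
proof -
  interpret core_inverse_equations a x by fact
  have "x = (x * star x) * star a"
    using xax herm by (metis star_mult mult.assoc)
  moreover have "star a = (star a * a) * x"
    using axa herm by (metis star_mult mult.assoc)
  moreover have "x = a * (x * x)" "a = x * (a * a)"
    using axx xaa by (simp_all add: mult.assoc)
  ultimately show ?thesis
    unfolding is_core_inverse_def set_eq_subset right_ideal_subset_iff left_ideal_subset_iff
    using axa by blast
qed

lemma core_inverse_unique:
  assumes x: "is_core_inverse star a x" and y: "is_core_inverse star a y"
  shows "x = y"
proof -
  interpret x: core_inverse_equations a x using core_inverseD[OF x] by blast
  interpret y: core_inverse_equations a y using core_inverseD[OF y] by blast
  have "a * x = star (a * x) * star (a * y)"
    using core_inverseD(2)[OF x] by (metis y.axa star_mult mult.assoc)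
  also have "\<dots> = a * y"
    using core_inverseD(2)[OF x] core_inverseD(2)[OF y] by (simp add: mult.assoc x.reassoc)
  finally have "a * x = a * y" .
  then show ?thesis
    by (metis x.axx y.xaa y.xax mult.assoc)
qed

lemma core_inv_eq:
  assumes "is_core_inverse star a x"
  shows "core_inv star a = x"
  unfolding core_inv_def using assms core_inverse_unique by blast

lemma core_le_iff:
  assumes "is_core_inverse star c y"
  shows "core_le star c d \<longleftrightarrow> y * c = y * d \<and> c * y = d * y"
  using assms unfolding core_le_def core_invertible_def core_inv_eq[OF assms] by blast

lemma core_inverse_power:
  assumes "is_core_inverse star a x"
  shows "is_core_inverse star (a ^ Suc n) (x ^ Suc n)"
proof -
  interpret core_inverse_equations a x using core_inverseD[OF assms] by blast
  show ?thesis
    using core_inverseI powers core_inverseD(2)[OF assms] power_mult_power(1) by metis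
qed

end

theorem proposition3p4:
  fixes star :: "'a::ring_1 \<Rightarrow> 'a" and a b :: 'a
  assumes "is_involution star"
    and "core_invertible star a"
    and "core_le star a b"
  shows "(sharp_le a b \<longleftrightarrow> a * b = b * a)
       \<and> (a * b = b * a \<longleftrightarrow> core_le star (a ^ 2) (b ^ 2))
       \<and> (core_le star (a ^ 2) (b ^ 2) \<longleftrightarrow> (\<forall>k::nat. k \<ge> 2 \<longrightarrow> core_le star (a ^ k) (b ^ k)))"
proof -
  obtain x where x: "is_core_inverse star a x"
    using assms(2) unfolding core_invertible_def by blast
  interpret core_below a x b
    using core_inverseD(1)[OF assms(1) x] assms(3) core_le_iff[OF assms(1) x]
    by (simp add: core_below_def core_below_axioms_def)
  have power_le_iff: "core_le star (a ^ Suc n) (b ^ Suc n)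
      \<longleftrightarrow> x ^ Suc n * a ^ Suc n = x ^ Suc n * b ^ Suc n" for n
    using core_le_iff[OF assms(1) core_inverse_power[OF assms(1) x]] b_power_mult_x_power
    by auto
  have square_le_iff: "core_le star (a ^ 2) (b ^ 2) \<longleftrightarrow> x * x * a * b = x * a"
    using power_le_iff[of 1] x_power2_mult_eq_iff by (simp add: numeral_2_eq_2)
  have "(\<forall>k::nat. k \<ge> 2 \<longrightarrow> core_le star (a ^ k) (b ^ k)) \<longleftrightarrow> a * b = b * a"
  proof
    assume commute: "a * b = b * a"
    show "\<forall>k::nat. k \<ge> 2 \<longrightarrow> core_le star (a ^ k) (b ^ k)"
    proof (intro allI impI)
      fix k :: nat
      assume "k \<ge> 2"
      then obtain n where "k = Suc n" by (cases k) auto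
      then show "core_le star (a ^ k) (b ^ k)"
        using power_le_iff commute_imp_x_power_mult_b_power[OF commute] by simp
    qed
  qed (use square_le_iff commute_iff in auto)
  then show ?thesis
    using sharp_le_iff commute_iff square_le_iff by blast
qed

end
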